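(* Let $G$ be a graph with $n$ vertices, and let $A$ be the set of paths of length $2$ in $G$ that are not contained in any cycle of length at least $4$ in $G$. Then \[\sum_{xyz\in A}\frac1{\deg y}<\frac{3n}2,\] where the sum is over unlabeled paths (each path $xyz=zyx$ counted once) and $\deg y$ is the degree in $G$ of the middle vertex $y$. *)

theory Defs
  imports Complex_Main
begin

definition simple_graph :: "'a set \<Rightarrow> ('a \<Rightarrow> 'a \<Rightarrow> bool) \<Rightarrow> bool" where
  "simple_graph V E \<longleftrightarrow> finite V \<and> (\<forall>x y. E x y \<longrightarrow> x \<in> V \<and> y \<in> V)
     \<and> (\<forall>x y. E x y \<longrightarrow> E y x) \<and> (\<forall>x. \<not> E x x)"

definition degree :: "'a set \<Rightarrow> ('a \<Rightarrow> 'a \<Rightarrow> bool) \<Rightarrow> 'a \<Rightarrow> nat" where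
  "degree V E y = card {w \<in> V. E y w}"

definition is_cycle :: "'a set \<Rightarrow> ('a \<Rightarrow> 'a \<Rightarrow> bool) \<Rightarrow> 'a list \<Rightarrow> bool" where
  "is_cycle V E vs \<longleftrightarrow> length vs \<ge> 3 \<and> distinct vs \<and> set vs \<subseteq> V
     \<and> (\<forall>i < length vs. E (vs ! i) (vs ! ((i + 1) mod length vs)))"

definition path_in_cycle :: "'a \<Rightarrow> 'a \<Rightarrow> 'a \<Rightarrow> 'a list \<Rightarrow> bool" where
  "path_in_cycle x y z vs \<longleftrightarrow> (\<exists>i < length vs. vs ! i = x
     \<and> vs ! ((i + 1) mod length vs) = y \<and> vs ! ((i + 2) mod length vs) = z)"

text \<open>Unlabelled paths of length 2, represented as (middle vertex, set of the two end vertices),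
which are not contained in any cycle of length at least 4.\<close>
definition bad_paths :: "'a set \<Rightarrow> ('a \<Rightarrow> 'a \<Rightarrow> bool) \<Rightarrow> ('a \<times> 'a set) set" where
  "bad_paths V E = {(y, {x, z}) | x y z. x \<noteq> z \<and> E x y \<and> E y z
     \<and> \<not> (\<exists>vs. is_cycle V E vs \<and> length vs \<ge> 4
            \<and> (path_in_cycle x y z vs \<or> path_in_cycle z y x vs))}"

end

(*
  Every bad path y{x,z} carries the weight 1/deg y; the weights are charged to vertices so
  that every vertex receives less than 3/2.

  In every component fix a root whose neighbours stay connected after deleting it (a vertex
  farthest from any given vertex will do). A bad path is charged to its middle vertex y if y is
  a root, and otherwise to an end that is cut off from the root in G - y with the edge xz
  removed; such an end exists since a path from x to z in that graph would close a cycle of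
  length at least 4 through x, y, z.

  A root z only receives the bad paths centred at z, and there are at most deg z of them: with
  respect to a fixed neighbour of z, the cut-off end of such a path forms a triangle with the
  other end, which it determines uniquely. A non-root z receives charge from (a) the neighbour
  p of z separating z from the root, which is unique and all of whose paths contain z, giving
  at most (deg p - 1)/deg p < 1 in total; (b) middles y of triangles y x z in which xz is a
  bridge of G - y cutting z off from the root: each such y contributes a single path of
  weight at most 1/2, there are at most two such y, and at most one if (a) occurs.
*)

theory Submission
  imports Defs "HOL-Library.Transitive_Closure_Table"
begin

section \<open>Reachability inside a vertex set\<close>

definition reach_in :: "'a set \<Rightarrow> ('a \<Rightarrow> 'a \<Rightarrow> bool) \<Rightarrow> 'a \<Rightarrow> 'a \<Rightarrow> bool" where
  "reach_in S R = (\<lambda>u v. R u v \<and> u \<in> S \<and> v \<in> S)\<^sup>*\<^sup>*"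

definition del_edge :: "('a \<Rightarrow> 'a \<Rightarrow> bool) \<Rightarrow> 'a set \<Rightarrow> 'a \<Rightarrow> 'a \<Rightarrow> bool" where
  "del_edge R P u v \<longleftrightarrow> R u v \<and> {u, v} \<noteq> P"

lemma reach_in_refl [simp]: "reach_in S R a a"
  by (simp add: reach_in_def)

lemma reach_in_step: "R a b \<Longrightarrow> a \<in> S \<Longrightarrow> b \<in> S \<Longrightarrow> reach_in S R b c \<Longrightarrow> reach_in S R a c"
  unfolding reach_in_def by (rule converse_rtranclp_into_rtranclp) auto

lemma reach_in_snoc: "reach_in S R a b \<Longrightarrow> R b c \<Longrightarrow> b \<in> S \<Longrightarrow> c \<in> S \<Longrightarrow> reach_in S R a c"
  unfolding reach_in_def by (rule rtranclp.rtrancl_into_rtrancl) auto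

lemma reach_in_trans: "reach_in S R a b \<Longrightarrow> reach_in S R b c \<Longrightarrow> reach_in S R a c"
  unfolding reach_in_def by (rule rtranclp_trans)

lemma reach_in_sym:
  assumes "symp R" "reach_in S R a b"
  shows "reach_in S R b a"
proof -
  have "symp (\<lambda>u v. R u v \<and> u \<in> S \<and> v \<in> S)"
    using assms(1) by (auto simp: symp_def)
  then show ?thesis
    using assms(2) unfolding reach_in_def by (metis symp_rtranclp sympD)
qed

lemma reach_in_mono:
  assumes "reach_in S R a b"
    and "\<And>u v. u \<in> S \<Longrightarrow> v \<in> S \<Longrightarrow> R u v \<Longrightarrow> u \<in> S' \<and> v \<in> S' \<and> R' u v"
  shows "reach_in S' R' a b"
  using assms(1) unfolding reach_in_def
  by (induction rule: rtranclp_induct) (auto dest: assms(2) intro: rtranclp.rtrancl_into_rtrancl)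

lemma reach_in_subset: "reach_in S R a b \<Longrightarrow> S \<subseteq> T \<Longrightarrow> reach_in T R a b"
  by (erule reach_in_mono) blast

lemma reach_in_target: "reach_in S R a b \<Longrightarrow> b = a \<or> b \<in> S"
  unfolding reach_in_def by (induction rule: rtranclp_induct) auto

lemma symp_del_edge: "symp R \<Longrightarrow> symp (del_edge R P)"
  by (auto simp: symp_def del_edge_def insert_commute)

lemma reach_in_avoid_either:
  assumes "reach_in S R a c" "a \<noteq> b" "b \<in> S"
  shows "reach_in (S - {b}) R a c \<or> reach_in (S - {a}) R b c"
  using assms(1) unfolding reach_in_def[of S]
proof (induction rule: rtranclp_induct)
  case (step v w)
  show ?case
  proof (cases "w = a \<or> w = b")
    case True
    then show ?thesis by auto
  next
    case False
    with step.IH show ?thesis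
      using step.hyps(2) assms(2,3) reach_in_target reach_in_snoc
      by (metis Diff_iff singletonD)
  qed
qed simp

lemma rtrancl_path_reach_in:
  "rtrancl_path R a ps b \<Longrightarrow> set (a # ps) \<subseteq> S \<Longrightarrow> reach_in S R a b"
  by (induction rule: rtrancl_path.induct) (auto intro: reach_in_step)

lemma reach_in_distinct_path:
  assumes "reach_in S R a b"
  obtains ps where "rtrancl_path R a ps b" "distinct (a # ps)" "set ps \<subseteq> S" "ps \<noteq> [] \<longrightarrow> a \<in> S"
proof -
  let ?RS = "\<lambda>u v. R u v \<and> u \<in> S \<and> v \<in> S"
  have restricted: "rtrancl_path R u qs v \<and> set qs \<subseteq> S \<and> (qs \<noteq> [] \<longrightarrow> u \<in> S)"
    if "rtrancl_path ?RS u qs v" for u qs v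
    using that by (induction rule: rtrancl_path.induct) (auto intro: rtrancl_path.intros)
  obtain qs where "rtrancl_path ?RS a qs b"
    using assms by (auto simp: reach_in_def rtranclp_eq_rtrancl_path)
  then obtain ps where "rtrancl_path ?RS a ps b" "distinct (a # ps)"
    by (rule rtrancl_path_distinct)
  with restricted that show thesis by blast
qed

lemma reach_in_first_step:
  assumes "reach_in S R a b" "a \<noteq> b"
  obtains w where "R a w" "a \<in> S" "w \<in> S" "w \<noteq> a" "reach_in (S - {a}) R w b"
proof -
  obtain ps where ps: "rtrancl_path R a ps b" "distinct (a # ps)" "set ps \<subseteq> S" "ps \<noteq> [] \<longrightarrow> a \<in> S"
    using assms(1) by (rule reach_in_distinct_path)
  then obtain w ws where "ps = w # ws"
    using assms(2) by (cases ps) (auto elim: rtrancl_path.cases)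
  with ps have "R a w" "rtrancl_path R w ws b" "a \<in> S" "w \<in> S" "w \<noteq> a" "set (w # ws) \<subseteq> S - {a}"
    by (auto elim: rtrancl_path.cases)
  then show thesis
    using that rtrancl_path_reach_in by metis
qed

lemma rtrancl_path_nth:
  "rtrancl_path R a ps b \<Longrightarrow> i < length ps \<Longrightarrow> R ((a # ps) ! i) (ps ! i)"
proof (induction arbitrary: i rule: rtrancl_path.induct)
  case (step x y ys z)
  then show ?case by (cases i) auto
qed simp

lemma rtrancl_path_last: "rtrancl_path R a ps b \<Longrightarrow> last (a # ps) = b"
  by (induction rule: rtrancl_path.induct) auto

lemma rtrancl_path_del_edge_length:
  assumes "rtrancl_path (del_edge R {x, z}) x ps z" "x \<noteq> z"
  shows "2 \<le> length ps"
proof (cases ps)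
  case Nil
  then show ?thesis
    using rtrancl_path_last[OF assms(1)] assms(2) by simp
next
  case (Cons w ws)
  show ?thesis
  proof (cases ws)
    case Nil
    then have "w = z"
      using rtrancl_path_last[OF assms(1)] Cons by simp
    then show ?thesis
      using rtrancl_path_nth[OF assms(1), of 0] Cons Nil by (simp add: del_edge_def)
  qed (simp add: Cons)
qed

section \<open>Bad paths\<close>

locale sgraph =
  fixes V :: "'a set" and E :: "'a \<Rightarrow> 'a \<Rightarrow> bool"
  assumes simple_graph: "simple_graph V E"
begin

lemma finite_V: "finite V"
  using simple_graph by (simp add: simple_graph_def)

lemma edge_in_V: "E x y \<Longrightarrow> x \<in> V" "E x y \<Longrightarrow> y \<in> V"
  using simple_graph by (simp_all add: simple_graph_def)

lemma edge_sym: "E x y \<Longrightarrow> E y x"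
  using simple_graph by (simp add: simple_graph_def)

lemma symp_E: "symp E"
  using edge_sym by (rule sympI)

lemma edge_neq: "E x y \<Longrightarrow> x \<noteq> y"
  using simple_graph by (auto simp: simple_graph_def)

lemma edge_irrefl [simp]: "\<not> E x x"
  using edge_neq by blast

lemma finite_neighbours: "finite {w \<in> V. E y w}"
  using finite_V by simp

lemma reach_in_V_iff: "reach_in V E a b \<longleftrightarrow> E\<^sup>*\<^sup>* a b"
proof -
  have "(\<lambda>u v. E u v \<and> u \<in> V \<and> v \<in> V) = E"
    using edge_in_V by (intro ext) blast
  then show ?thesis by (simp add: reach_in_def)
qed

lemma cycle_through_path:
  assumes "x \<noteq> z" "E x y" "E y z" "reach_in (V - {y}) (del_edge E {x, z}) x z"
  shows "\<exists>vs. is_cycle V E vs \<and> 4 \<le> length vs \<and> path_in_cycle z y x vs"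
proof -
  obtain ps where ps: "rtrancl_path (del_edge E {x, z}) x ps z" "distinct (x # ps)"
    "set ps \<subseteq> V - {y}" "ps \<noteq> [] \<longrightarrow> x \<in> V - {y}"
    using assms(4) by (rule reach_in_distinct_path)
  have y_notin: "y \<notin> set (x # ps)" and x_in: "x \<in> V"
    using ps(3) assms(2) edge_neq edge_in_V by auto
  have len: "2 \<le> length ps"
    using ps(1) assms(1) by (rule rtrancl_path_del_edge_length)
  then have ps_ne: "ps \<noteq> []" and last_ps: "last ps = z"
    using rtrancl_path_last[OF ps(1)] by auto
  define vs where "vs = y # x # ps"
  have z_at: "vs ! (length ps + 1) = z"
    using ps_ne last_ps last_conv_nth[of ps] by (simp add: vs_def)
  have "is_cycle V E vs"
    unfolding is_cycle_def
  proof (intro conjI allI impI)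
    show "3 \<le> length vs" "distinct vs" "set vs \<subseteq> V"
      using len ps y_notin x_in assms(2) edge_in_V by (auto simp: vs_def)
    fix i assume "i < length vs"
    then consider "i = 0" | j where "i = Suc j" "j < length ps" | "i = length ps + 1"
      by (cases i) (auto simp: vs_def less_Suc_eq)
    then show "E (vs ! i) (vs ! ((i + 1) mod length vs))"
    proof cases
      case 1
      then show ?thesis using edge_sym[OF assms(2)] by (simp add: vs_def)
    next
      case (2 j)
      then have "(i + 1) mod length vs = Suc i" by (simp add: vs_def)
      then show ?thesis
        using 2 rtrancl_path_nth[OF ps(1), of j] by (simp add: vs_def del_edge_def)
    next
      case 3
      then show ?thesis using z_at edge_sym[OF assms(3)] by (simp add: vs_def)
    qed
  qed
  moreover have "path_in_cycle z y x vs"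
  proof -
    have "(length ps + 1 + 2) mod length vs = 1"
      by (simp add: vs_def mod_if)
    then show ?thesis
      unfolding path_in_cycle_def using z_at by (intro exI[of _ "length ps + 1"]) (simp add: vs_def)
  qed
  ultimately show ?thesis
    using len by (auto simp: vs_def)
qed

lemma bad_pathE:
  assumes "(y, P) \<in> bad_paths V E"
  obtains x z where "P = {x, z}" "x \<noteq> z" "E y x" "E y z"
    "\<not> reach_in (V - {y}) (del_edge E P) x z"
proof -
  obtain x z where xz: "P = {x, z}" "x \<noteq> z" "E x y" "E y z"
    "\<not> (\<exists>vs. is_cycle V E vs \<and> 4 \<le> length vs \<and> (path_in_cycle x y z vs \<or> path_in_cycle z y x vs))"
    using assms unfolding bad_paths_def by blast
  then have "\<not> reach_in (V - {y}) (del_edge E P) x z"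
    using cycle_through_path by blast
  with xz show thesis
    using that edge_sym by blast
qed

lemma bad_path_other_end:
  assumes "(y, P) \<in> bad_paths V E" "e \<in> P"
  obtains x where "P = {x, e}" "x \<noteq> e" "E y x" "E y e"
proof -
  obtain x z where "P = {x, z}" "x \<noteq> z" "E y x" "E y z"
    using assms(1) by (rule bad_pathE)
  with assms(2) that show thesis
    by (auto simp: insert_commute)
qed

lemma bad_path_edge: "(y, P) \<in> bad_paths V E \<Longrightarrow> e \<in> P \<Longrightarrow> E y e"
  by (metis bad_path_other_end)

lemma bad_path_degree:
  assumes "(y, P) \<in> bad_paths V E"
  shows "2 \<le> degree V E y"
proof -
  obtain x z where "P = {x, z}" "x \<noteq> z" "E y x" "E y z"
    using assms by (rule bad_pathE)
  then have "{x, z} \<subseteq> {w \<in> V. E y w}" "card {x, z} = 2"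
    using edge_in_V by auto
  then show ?thesis
    unfolding degree_def by (metis card_mono finite_neighbours)
qed

lemma finite_bad_paths: "finite (bad_paths V E)"
proof (rule finite_subset)
  show "bad_paths V E \<subseteq> V \<times> Pow V"
    by (auto simp: bad_paths_def dest: edge_in_V)
  show "finite (V \<times> Pow V)"
    using finite_V by simp
qed

lemma bad_path_cut_end_exists:
  assumes "(y, P) \<in> bad_paths V E"
  shows "\<exists>e. e \<in> P \<and> \<not> reach_in (V - {y}) (del_edge E P) e \<rho>"
proof (rule ccontr)
  assume "\<not> ?thesis"
  then have reach: "reach_in (V - {y}) (del_edge E P) e \<rho>" if "e \<in> P" for e
    using that by blast
  obtain x z where xz: "P = {x, z}" "\<not> reach_in (V - {y}) (del_edge E P) x z"
    using assms by (rule bad_pathE)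
  have "reach_in (V - {y}) (del_edge E P) x \<rho>" "reach_in (V - {y}) (del_edge E P) \<rho> z"
    using reach[of x] reach_in_sym[OF symp_del_edge[OF symp_E] reach[of z]] xz(1) by simp_all
  with xz(2) show False
    by (meson reach_in_trans)
qed

definition cut_end :: "'a \<Rightarrow> 'a set \<Rightarrow> 'a \<Rightarrow> 'a" where
  "cut_end y P \<rho> = (SOME e. e \<in> P \<and> \<not> reach_in (V - {y}) (del_edge E P) e \<rho>)"

lemma cut_end:
  assumes "(y, P) \<in> bad_paths V E"
  shows "cut_end y P \<rho> \<in> P" "\<not> reach_in (V - {y}) (del_edge E P) (cut_end y P \<rho>) \<rho>"
proof -
  have "cut_end y P \<rho> \<in> P \<and> \<not> reach_in (V - {y}) (del_edge E P) (cut_end y P \<rho>) \<rho>"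
    unfolding cut_end_def by (rule someI_ex[OF bad_path_cut_end_exists[OF assms]])
  then show "cut_end y P \<rho> \<in> P" "\<not> reach_in (V - {y}) (del_edge E P) (cut_end y P \<rho>) \<rho>"
    by auto
qed

section \<open>Triangle bridges\<close>

definition triangle_bridge :: "'a \<Rightarrow> 'a \<Rightarrow> 'a \<Rightarrow> 'a \<Rightarrow> bool" where
  "triangle_bridge \<rho> y x z \<longleftrightarrow> E y x \<and> E y z \<and> x \<noteq> z \<and> E x z
     \<and> reach_in (V - {y}) E z \<rho> \<and> \<not> reach_in (V - {y}) (del_edge E {x, z}) z \<rho>"

lemma triangle_bridgeI:
  assumes "(y, P) \<in> bad_paths V E" "e \<in> P"
    and "reach_in (V - {y}) E e \<rho>" "\<not> reach_in (V - {y}) (del_edge E P) e \<rho>"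
  obtains x where "P = {x, e}" "triangle_bridge \<rho> y x e"
proof -
  obtain x where x: "P = {x, e}" "x \<noteq> e" "E y x" "E y e"
    using assms(1,2) by (rule bad_path_other_end)
  have "E x e"
  proof (rule ccontr)
    assume "\<not> E x e"
    then have "E u v \<Longrightarrow> del_edge E P u v" for u v
      using x(1) edge_sym by (auto simp: del_edge_def doubleton_eq_iff)
    then have "reach_in (V - {y}) (del_edge E P) e \<rho>"
      using reach_in_mono[OF assms(3)] by blast
    with assms(4) show False ..
  qed
  with x assms(3,4) that show thesis
    by (simp add: triangle_bridge_def)
qed

lemma triangle_bridge_no_reach:
  assumes tb: "triangle_bridge \<rho> y x z" and w: "E z w" "w \<noteq> y" "w \<noteq> x"
  shows "\<not> reach_in (V - {y} - {z}) E w \<rho>"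
proof
  assume "reach_in (V - {y} - {z}) E w \<rho>"
  then have "reach_in (V - {y}) (del_edge E {x, z}) w \<rho>"
    by (rule reach_in_mono) (auto simp: del_edge_def doubleton_eq_iff)
  moreover have "del_edge E {x, z} z w"
    using w edge_neq by (auto simp: del_edge_def doubleton_eq_iff)
  moreover have "z \<in> V - {y}" "w \<in> V - {y}"
    using tb w edge_in_V by (auto simp: triangle_bridge_def)
  ultimately have "reach_in (V - {y}) (del_edge E {x, z}) z \<rho>"
    using reach_in_step by metis
  with tb show False
    by (simp add: triangle_bridge_def)
qed

lemma triangle_bridge_reach:
  assumes tb: "triangle_bridge \<rho> y x z"
  shows "reach_in (V - {y} - {z}) E x \<rho>"
proof -
  have "reach_in (V - {y}) E z \<rho>" "z \<noteq> \<rho>"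
    using tb by (auto simp: triangle_bridge_def)
  then obtain w where "E z w" "z \<in> V - {y}" "w \<in> V - {y}" "w \<noteq> z" "reach_in (V - {y} - {z}) E w \<rho>"
    by (rule reach_in_first_step)
  with triangle_bridge_no_reach[OF tb] show ?thesis
    by blast
qed

lemma triangle_bridge_unique:
  assumes "triangle_bridge \<rho> y x z" "triangle_bridge \<rho> y x' z"
  shows "x = x'"
proof (rule ccontr)
  assume "x \<noteq> x'"
  moreover have "E z x'" "x' \<noteq> y"
    using assms(2) edge_sym edge_neq by (auto simp: triangle_bridge_def)
  ultimately show False
    using triangle_bridge_no_reach[OF assms(1)] triangle_bridge_reach[OF assms(2)] by blast
qed

lemma triangle_bridge_no_common_neighbour:
  assumes tb: "triangle_bridge \<rho> y x z" and w: "E z w" "E w x" "w \<noteq> y" "w \<noteq> x"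
  shows False
proof -
  have "x \<in> V - {y} - {z}" "w \<in> V - {y} - {z}"
    using tb w edge_in_V edge_neq by (auto simp: triangle_bridge_def)
  then have "reach_in (V - {y} - {z}) E w \<rho>"
    using reach_in_step[OF w(2) _ _ triangle_bridge_reach[OF tb]] by blast
  with triangle_bridge_no_reach[OF tb w(1,3,4)] show False ..
qed

lemma triangle_bridges_interlock:
  assumes tb: "triangle_bridge \<rho> y x z" and tb': "triangle_bridge \<rho> y' x' z" and "y \<noteq> y'"
  shows "y' = x \<or> y = x'"
proof (rule ccontr)
  assume "\<not> (y' = x \<or> y = x')"
  then have "y' \<noteq> x" "y \<noteq> x'" by auto
  have zy': "E z y'" and y'_in: "y' \<in> V - {y} - {z}"
    using tb' \<open>y \<noteq> y'\<close> edge_sym edge_neq edge_in_V by (auto simp: triangle_bridge_def)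
  have "\<not> reach_in (V - {y} - {z}) E y' \<rho>"
    using triangle_bridge_no_reach[OF tb zy'] \<open>y \<noteq> y'\<close> \<open>y' \<noteq> x\<close> by simp
  then have "\<not> reach_in (V - {y} - {z} - {x}) E y' \<rho>"
    using reach_in_subset[of _ E y' \<rho> "V - {y} - {z}"] by blast
  then have "reach_in (V - {y} - {z} - {y'}) E x \<rho>"
    using reach_in_avoid_either[OF triangle_bridge_reach[OF tb] \<open>y' \<noteq> x\<close>[symmetric] y'_in] by blast
  then have "reach_in (V - {y'}) (del_edge E {x', z}) x \<rho>"
    by (rule reach_in_mono) (auto simp: del_edge_def doubleton_eq_iff)
  moreover have "del_edge E {x', z} z y" "del_edge E {x', z} y x"
    using tb \<open>y \<noteq> x'\<close> edge_sym edge_neq by (auto simp: triangle_bridge_def del_edge_def doubleton_eq_iff)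
  moreover have "x \<in> V - {y'}" "y \<in> V - {y'}" "z \<in> V - {y'}"
    using tb tb' \<open>y \<noteq> y'\<close> \<open>y' \<noteq> x\<close> edge_in_V edge_neq by (auto simp: triangle_bridge_def)
  ultimately have "reach_in (V - {y'}) (del_edge E {x', z}) z \<rho>"
    by (meson reach_in_step)
  with tb' show False
    by (simp add: triangle_bridge_def)
qed

lemma triangle_bridge_no_three_middles:
  assumes "triangle_bridge \<rho> y1 x1 z" "triangle_bridge \<rho> y2 x2 z" "triangle_bridge \<rho> y3 x3 z"
    and "y1 \<noteq> y2" "y1 \<noteq> y3" "y2 \<noteq> y3"
  shows False
proof -
  have "y2 = x1 \<or> y1 = x2" "y3 = x1 \<or> y1 = x3" "y3 = x2 \<or> y2 = x3"
    using triangle_bridges_interlock[OF assms(1,2,4)] triangle_bridges_interlock[OF assms(1,3,5)]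
      triangle_bridges_interlock[OF assms(2,3,6)] by simp_all
  then consider "y2 = x1" "y1 = x3" "y3 = x2" | "y1 = x2" "y2 = x3" "y3 = x1"
    using assms(4-6) by blast
  then show False
  proof cases
    case 1
    then have "E z y3" "E y3 y2"
      using assms(2,3) edge_sym by (auto simp: triangle_bridge_def)
    with 1 show False
      using triangle_bridge_no_common_neighbour[OF assms(1)] assms(5,6) by blast
  next
    case 2
    then have "E z y2" "E y2 y3"
      using assms(2,3) edge_sym by (auto simp: triangle_bridge_def)
    with 2 show False
      using triangle_bridge_no_common_neighbour[OF assms(1)] assms(4,6) by blast
  qed
qed

lemma separating_neighbour_unique:
  assumes "E z p" "E z p'" "E\<^sup>*\<^sup>* p \<rho>"
    and "\<not> reach_in (V - {p}) E z \<rho>" "\<not> reach_in (V - {p'}) E z \<rho>"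
  shows "p = p'"
proof (rule ccontr)
  assume "p \<noteq> p'"
  moreover have "reach_in V E p \<rho>" "p' \<in> V"
    using assms(2,3) edge_in_V reach_in_V_iff by auto
  ultimately consider "reach_in (V - {p'}) E p \<rho>" | "reach_in (V - {p}) E p' \<rho>"
    using reach_in_avoid_either by metis
  then show False
  proof cases
    case 1
    moreover have "z \<in> V - {p'}" "p \<in> V - {p'}"
      using assms(1,2) \<open>p \<noteq> p'\<close> edge_in_V by auto
    ultimately have "reach_in (V - {p'}) E z \<rho>"
      using reach_in_step[of E z p "V - {p'}" \<rho>] assms(1) by blast
    with assms(5) show False ..
  next
    case 2
    moreover have "z \<in> V - {p}" "p' \<in> V - {p}"
      using assms(1,2) \<open>p \<noteq> p'\<close> edge_in_V by auto
    ultimately have "reach_in (V - {p}) E z \<rho>"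
      using reach_in_step[of E z p' "V - {p}" \<rho>] assms(2) by blast
    with assms(4) show False ..
  qed
qed

lemma triangle_bridge_at_separating_neighbour:
  assumes tb: "triangle_bridge \<rho> y x z" and "E z p" and sep: "\<not> reach_in (V - {p}) E z \<rho>"
  shows "x = p"
proof (rule ccontr)
  assume "x \<noteq> p"
  have "p \<noteq> y"
    using tb sep by (auto simp: triangle_bridge_def)
  then have p_in: "p \<in> V - {y} - {z}"
    using \<open>E z p\<close> edge_in_V edge_neq by auto
  consider "reach_in (V - {y} - {z} - {p}) E x \<rho>" | "reach_in (V - {y} - {z} - {x}) E p \<rho>"
    using reach_in_avoid_either[OF triangle_bridge_reach[OF tb] \<open>x \<noteq> p\<close> p_in] by blast
  then show False
  proof cases
    case 1
    then have "reach_in (V - {p}) E x \<rho>"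
      by (rule reach_in_subset) auto
    moreover have "E z x" "z \<in> V - {p}" "x \<in> V - {p}"
      using tb \<open>x \<noteq> p\<close> \<open>E z p\<close> edge_sym edge_in_V edge_neq by (auto simp: triangle_bridge_def)
    ultimately have "reach_in (V - {p}) E z \<rho>"
      by (meson reach_in_step)
    with sep show False ..
  next
    case 2
    then have "reach_in (V - {y} - {z}) E p \<rho>"
      by (rule reach_in_subset) auto
    with triangle_bridge_no_reach[OF tb \<open>E z p\<close> \<open>p \<noteq> y\<close>] \<open>x \<noteq> p\<close> show False
      by blast
  qed
qed

section \<open>Roots\<close>

definition non_cut :: "'a \<Rightarrow> bool" where
  "non_cut r \<longleftrightarrow> (\<forall>w w'. E r w \<longrightarrow> E r w' \<longrightarrow> reach_in (V - {r}) E w w')"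

lemma relpowp_reach_in_avoiding:
  assumes "(E ^^ n) v w" "w \<noteq> r" "\<And>k. k < n \<Longrightarrow> \<not> (E ^^ k) v r"
  shows "reach_in (V - {r}) E w v"
  using assms
proof (induction n arbitrary: w)
  case (Suc n)
  obtain u where u: "(E ^^ n) v u" "E u w"
    using Suc.prems(1) by (rule relpowp_Suc_E)
  have "u \<noteq> r"
    using Suc.prems(3)[of n] u(1) by auto
  then have "reach_in (V - {r}) E u v"
    using Suc.IH[OF u(1)] Suc.prems(3) by simp
  moreover have "u \<in> V - {r}" "w \<in> V - {r}"
    using u(2) \<open>u \<noteq> r\<close> Suc.prems(2) edge_in_V by auto
  ultimately show ?case
    using reach_in_step[of E w u "V - {r}" v] edge_sym[OF u(2)] by blast
qed simp

text \<open>A vertex at maximal distance from v is not a cut vertex: each of its neighbours reaches v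
  along a shortest walk, which cannot pass through it.\<close>

lemma non_cut_reachable:
  assumes "v \<in> V"
  shows "\<exists>r. E\<^sup>*\<^sup>* v r \<and> non_cut r"
proof -
  define C where "C = {w. E\<^sup>*\<^sup>* v w}"
  define dist where "dist w = (LEAST k. (E ^^ k) v w)" for w
  have dist: "(E ^^ dist w) v w" if "w \<in> C" for w
  proof -
    have "\<exists>k. (E ^^ k) v w"
      using that rtranclp_imp_relpowp by (simp add: C_def)
    then show ?thesis
      unfolding dist_def by (rule LeastI_ex)
  qed
  have dist_le: "dist w \<le> k" if "(E ^^ k) v w" for w k
    using that unfolding dist_def by (rule Least_le)
  have "E\<^sup>*\<^sup>* v w \<Longrightarrow> w \<in> V" for w
    by (induction rule: rtranclp_induct) (auto simp: assms dest: edge_in_V)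
  then have fin: "finite (dist ` C)"
    using finite_V by (auto simp: C_def intro: finite_subset)
  have "v \<in> C"
    by (simp add: C_def)
  then have "Max (dist ` C) \<in> dist ` C"
    using fin by (intro Max_in) auto
  then obtain r where r: "r \<in> C" "dist r = Max (dist ` C)"
    by auto
  have r_max: "dist w \<le> dist r" if "w \<in> C" for w
    using fin that r(2) by simp
  have to_v: "reach_in (V - {r}) E u v" if "E r u" for u
  proof -
    have "u \<in> C"
      using r(1) that by (simp add: C_def rtranclp.rtrancl_into_rtrancl)
    show ?thesis
    proof (rule relpowp_reach_in_avoiding)
      show "(E ^^ dist u) v u" "u \<noteq> r"
        using dist[OF \<open>u \<in> C\<close>] that by auto
      show "\<not> (E ^^ k) v r" if "k < dist u" for k
        using dist_le[of k r] r_max[OF \<open>u \<in> C\<close>] that by linarith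
    qed
  qed
  have "non_cut r"
    unfolding non_cut_def
    using reach_in_trans[OF to_v reach_in_sym[OF symp_E to_v]] by blast
  with r(1) show ?thesis
    by (auto simp: C_def)
qed

definition root :: "'a \<Rightarrow> 'a" where
  "root v = (SOME r. E\<^sup>*\<^sup>* v r \<and> non_cut r)"

lemma root:
  assumes "v \<in> V"
  shows "E\<^sup>*\<^sup>* v (root v)" "non_cut (root v)"
proof -
  have "E\<^sup>*\<^sup>* v (root v) \<and> non_cut (root v)"
    unfolding root_def by (rule someI_ex[OF non_cut_reachable[OF assms]])
  then show "E\<^sup>*\<^sup>* v (root v)" "non_cut (root v)"
    by auto
qed

lemma root_edge:
  assumes "E v w"
  shows "root v = root w"
proof -
  have "E\<^sup>*\<^sup>* v r \<longleftrightarrow> E\<^sup>*\<^sup>* w r" for r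
    using assms edge_sym by (meson converse_rtranclp_into_rtranclp)
  then show ?thesis
    by (simp add: root_def)
qed

section \<open>Charging bad paths to vertices\<close>

definition target :: "'a \<times> 'a set \<Rightarrow> 'a" where
  "target q = (if root (fst q) = fst q then fst q else cut_end (fst q) (snd q) (root (fst q)))"

definition targeted :: "'a \<Rightarrow> ('a \<times> 'a set) set" where
  "targeted z = {q \<in> bad_paths V E. target q = z}"

definition weight :: "('a \<times> 'a set) set \<Rightarrow> real" where
  "weight Q = (\<Sum>q\<in>Q. 1 / real (degree V E (fst q)))"

lemma target_in_V:
  assumes "q \<in> bad_paths V E"
  shows "target q \<in> V"
proof -
  obtain y P where q: "q = (y, P)"
    by (cases q)
  obtain x z where "P = {x, z}" "E y x"
    using assms unfolding q by (rule bad_pathE)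
  then have "y \<in> V" "cut_end y P (root y) \<in> V"
    using cut_end(1)[of y P] assms bad_path_edge edge_in_V unfolding q by blast+
  then show ?thesis
    by (simp add: target_def q)
qed

lemma weight_bad_paths: "weight (bad_paths V E) = (\<Sum>z\<in>V. weight (targeted z))"
proof -
  have "target ` bad_paths V E \<subseteq> V"
    using target_in_V by blast
  then show ?thesis
    unfolding weight_def targeted_def by (rule sum.group[OF finite_bad_paths finite_V, symmetric])
qed

lemma weight_same_middle:
  assumes "\<And>q. q \<in> Q \<Longrightarrow> fst q = y"
  shows "weight Q = card Q / degree V E y"
  unfolding weight_def using assms by simp

lemma finite_targeted: "finite (targeted z)"
  using finite_bad_paths by (simp add: targeted_def)

lemma non_cut_bad_path_bridge:
  assumes "non_cut z" "E z w" and bad: "(z, P) \<in> bad_paths V E"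
  obtains x where "P = {x, cut_end z P w}" "triangle_bridge w z x (cut_end z P w)"
proof -
  have "cut_end z P w \<in> P"
    using bad by (rule cut_end)
  moreover have "reach_in (V - {z}) E (cut_end z P w) w"
    using assms(1,2) bad_path_edge[OF bad \<open>cut_end z P w \<in> P\<close>] by (simp add: non_cut_def)
  moreover have "\<not> reach_in (V - {z}) (del_edge E P) (cut_end z P w) w"
    using bad by (rule cut_end)
  ultimately obtain x where "P = {x, cut_end z P w}" "triangle_bridge w z x (cut_end z P w)"
    by (rule triangle_bridgeI[OF bad])
  then show thesis
    by (rule that)
qed

lemma card_bad_paths_at_non_cut:
  assumes "non_cut z"
  shows "card {P. (z, P) \<in> bad_paths V E} \<le> degree V E z"
proof (cases "\<exists>w. E z w")
  case False
  then have "{P. (z, P) \<in> bad_paths V E} = {}"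
    by (auto elim: bad_pathE)
  then show ?thesis
    by simp
next
  case True
  then obtain w0 where "E z w0"
    by blast
  define A where "A = {P. (z, P) \<in> bad_paths V E}"
  define g where "g P = cut_end z P w0" for P
  have "inj_on g A"
  proof (rule inj_onI)
    fix P P' assume "P \<in> A" "P' \<in> A" and g_eq: "g P = g P'"
    then obtain x x' where "P = {x, g P}" "triangle_bridge w0 z x (g P)"
      "P' = {x', g P'}" "triangle_bridge w0 z x' (g P')"
      using non_cut_bad_path_bridge[OF assms \<open>E z w0\<close>] unfolding A_def g_def by (metis mem_Collect_eq)
    with g_eq show "P = P'"
      using triangle_bridge_unique by metis
  qed
  moreover have "g ` A \<subseteq> {w \<in> V. E z w}"
  proof
    fix e assume "e \<in> g ` A"
    then obtain P where "(z, P) \<in> bad_paths V E" "e = g P"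
      by (auto simp: A_def)
    then have "E z e"
      using bad_path_edge cut_end(1) by (simp add: g_def)
    then show "e \<in> {w \<in> V. E z w}"
      using edge_in_V(2) by blast
  qed
  ultimately have "card A \<le> card {w \<in> V. E z w}"
    using card_inj_on_le finite_neighbours by blast
  then show ?thesis
    by (simp add: A_def degree_def)
qed

lemma target_root_middle:
  assumes "(y, P) \<in> bad_paths V E" "target (y, P) = z" "root z = z"
  shows "y = z"
proof (rule ccontr)
  assume "y \<noteq> z"
  then have z: "cut_end y P (root y) = z"
    using assms(2) by (simp add: target_def split: if_splits)
  then have "E y z"
    using cut_end(1)[OF assms(1)] bad_path_edge[OF assms(1)] by blast
  then have "root y = z"
    using root_edge[of y z] assms(3) by simp
  then show False
    using cut_end(2)[OF assms(1), of z] z by simp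
qed

lemma weight_targeted_root:
  assumes "z \<in> V" "root z = z"
  shows "weight (targeted z) \<le> 1"
proof -
  define A where "A = {P. (z, P) \<in> bad_paths V E}"
  have middle: "fst q = z" if "q \<in> targeted z" for q
    using that target_root_middle assms(2) by (cases q) (auto simp: targeted_def)
  then have "targeted z \<subseteq> Pair z ` A"
    by (force simp: A_def targeted_def)
  moreover have "Pair z ` A \<subseteq> bad_paths V E"
    by (auto simp: A_def)
  ultimately have "card (targeted z) \<le> card (Pair z ` A)"
    using finite_bad_paths by (meson card_mono finite_subset)
  also have "\<dots> = card A"
    by (rule card_image) (simp add: inj_on_def)
  also have "\<dots> \<le> degree V E z"
    unfolding A_def using card_bad_paths_at_non_cut root(2)[OF assms(1)] assms(2) by simp
  finally have card_le: "card (targeted z) \<le> degree V E z" .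
  have "weight (targeted z) = card (targeted z) / degree V E z"
    using middle by (rule weight_same_middle)
  also have "\<dots> \<le> 1"
    using card_le by (cases "degree V E z = 0") (simp_all add: divide_le_eq_1)
  finally show ?thesis .
qed

lemma target_non_root:
  assumes bad: "(y, P) \<in> bad_paths V E" and "target (y, P) = z" "root z \<noteq> z"
  shows "z \<in> P" "E y z" "root y = root z"
    "\<not> reach_in (V - {y}) E z (root z) \<or> (\<exists>x. P = {x, z} \<and> triangle_bridge (root z) y x z)"
proof -
  have "root y \<noteq> y"
    using assms(2,3) by (auto simp: target_def)
  then have z: "cut_end y P (root y) = z"
    using assms(2) by (simp add: target_def)
  then show "z \<in> P"
    using cut_end(1)[OF bad] by blast
  then show "E y z"
    by (rule bad_path_edge[OF bad])
  then show root_eq: "root y = root z"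
    by (rule root_edge)
  show "\<not> reach_in (V - {y}) E z (root z) \<or> (\<exists>x. P = {x, z} \<and> triangle_bridge (root z) y x z)"
  proof (cases "reach_in (V - {y}) E z (root z)")
    case True
    have "\<not> reach_in (V - {y}) (del_edge E P) z (root y)"
      using cut_end(2)[OF bad, of "root y"] z by simp
    then have "\<not> reach_in (V - {y}) (del_edge E P) z (root z)"
      using root_eq by simp
    with True obtain x where "P = {x, z}" "triangle_bridge (root z) y x z"
      using triangle_bridgeI[OF bad \<open>z \<in> P\<close>] by blast
    then show ?thesis
      by blast
  qed simp
qed

lemma targeted_non_root_edge:
  assumes "q \<in> targeted z" "root z \<noteq> z"
  shows "E z (fst q)"
proof -
  have "(fst q, snd q) \<in> bad_paths V E" "target (fst q, snd q) = z"
    using assms(1) by (simp_all add: targeted_def)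
  then have "E (fst q) z"
    by (rule target_non_root(2)[OF _ _ assms(2)])
  then show ?thesis
    by (rule edge_sym)
qed

lemma targeted_separated_middle:
  assumes "q \<in> targeted z" "\<not> reach_in (V - {fst q}) E z (root z)"
    and "root z \<noteq> z" "E z p" "\<not> reach_in (V - {p}) E z (root z)"
  shows "fst q = p"
proof -
  have "E\<^sup>*\<^sup>* p (root z)"
    using root(1)[OF edge_in_V(2)[OF assms(4)]] root_edge[OF assms(4)] by simp
  then show ?thesis
    using separating_neighbour_unique[OF assms(4) targeted_non_root_edge[OF assms(1,3)] _ assms(5,2)]
    by simp
qed

lemma finite_triangle_bridge_middles: "finite {y. \<exists>x. triangle_bridge \<rho> y x z}"
  using finite_V by (rule finite_subset[rotated]) (auto simp: triangle_bridge_def dest: edge_in_V)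

lemma card_triangle_bridge_middles: "card {y. \<exists>x. triangle_bridge \<rho> y x z} \<le> 2"
proof (rule ccontr)
  assume "\<not> ?thesis"
  then have "3 \<le> card {y. \<exists>x. triangle_bridge \<rho> y x z}"
    by simp
  then obtain Y where "Y \<subseteq> {y. \<exists>x. triangle_bridge \<rho> y x z}" "card Y = 3" "finite Y"
    by (rule obtain_subset_with_card_n)
  then obtain y1 y2 y3 x1 x2 x3 where "y1 \<noteq> y2" "y1 \<noteq> y3" "y2 \<noteq> y3"
    "triangle_bridge \<rho> y1 x1 z" "triangle_bridge \<rho> y2 x2 z" "triangle_bridge \<rho> y3 x3 z"
    unfolding card_3_iff by auto
  then show False
    using triangle_bridge_no_three_middles by blast
qed

lemma card_triangle_bridge_middles_separated:
  assumes "E z p" "\<not> reach_in (V - {p}) E z \<rho>"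
  shows "card {y. \<exists>x. triangle_bridge \<rho> y x z} \<le> 1"
proof -
  have "y = y'" if "triangle_bridge \<rho> y x z" "triangle_bridge \<rho> y' x' z" for y y' x x'
  proof (rule ccontr)
    assume "y \<noteq> y'"
    have "x = p" "x' = p"
      using that triangle_bridge_at_separating_neighbour assms by blast+
    then have "y' = p \<or> y = p"
      using triangle_bridges_interlock[OF that \<open>y \<noteq> y'\<close>] by simp
    with that assms(2) show False
      by (auto simp: triangle_bridge_def)
  qed
  then show ?thesis
    using card_le_Suc0_iff_eq[OF finite_triangle_bridge_middles] by auto
qed

lemma weight_split:
  assumes "finite Q"
  shows "weight Q = weight {q \<in> Q. P q} + weight {q \<in> Q. \<not> P q}"
proof -
  have "weight ({q \<in> Q. P q} \<union> {q \<in> Q. \<not> P q}) = weight {q \<in> Q. P q} + weight {q \<in> Q. \<not> P q}"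
    unfolding weight_def using assms by (intro sum.union_disjoint) auto
  moreover have "{q \<in> Q. P q} \<union> {q \<in> Q. \<not> P q} = Q"
    by blast
  ultimately show ?thesis
    by simp
qed

lemma weight_targeted_separated:
  assumes "root z \<noteq> z" "E z p" "\<not> reach_in (V - {p}) E z (root z)"
  shows "weight {q \<in> targeted z. \<not> reach_in (V - {fst q}) E z (root z)} < 1"
    (is "weight ?Q < 1")
proof -
  have middle: "fst q = p" if "q \<in> ?Q" for q
    using that targeted_separated_middle[OF _ _ assms] by blast
  define S where "S = {w \<in> V. E p w} - {z}"
  have "?Q \<subseteq> (\<lambda>w. (p, {w, z})) ` S"
  proof
    fix q assume "q \<in> ?Q"
    then obtain P where q: "q = (p, P)" "(p, P) \<in> bad_paths V E" "target (p, P) = z"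
      using middle[of q] by (cases q) (simp add: targeted_def)
    then have "z \<in> P"
      using target_non_root(1)[OF q(2,3) assms(1)] by blast
    with q(2) obtain x where "P = {x, z}" "x \<noteq> z" "E p x" "E p z"
      by (rule bad_path_other_end)
    with q(1) show "q \<in> (\<lambda>w. (p, {w, z})) ` S"
      using edge_in_V(2)[of p x] by (auto simp: S_def)
  qed
  then have "card ?Q \<le> card ((\<lambda>w. (p, {w, z})) ` S)"
    by (rule card_mono[rotated]) (simp add: S_def finite_neighbours)
  also have "\<dots> \<le> card S"
    by (rule card_image_le) (simp add: S_def finite_neighbours)
  also have "\<dots> < degree V E p"
  proof -
    have z: "z \<in> {w \<in> V. E p w}"
      using edge_sym[OF assms(2)] edge_in_V(1)[OF assms(2)] by blast
    then have "0 < card {w \<in> V. E p w}"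
      using finite_neighbours card_gt_0_iff by blast
    then show ?thesis
      unfolding S_def degree_def card_Diff_singleton[OF z] by linarith
  qed
  finally have "card ?Q < degree V E p" .
  have "weight ?Q = card ?Q / degree V E p"
    using middle by (rule weight_same_middle)
  also have "\<dots> < 1"
    using \<open>card ?Q < degree V E p\<close> by simp
  finally show ?thesis .
qed

lemma weight_le_half_card:
  assumes "Q \<subseteq> bad_paths V E"
  shows "weight Q \<le> card Q / 2"
proof -
  have "1 / real (degree V E (fst q)) \<le> 1 / 2" if "q \<in> Q" for q
  proof -
    have "2 \<le> degree V E (fst q)"
      using that assms bad_path_degree by (cases q) auto
    then show ?thesis
      by (simp add: divide_left_mono)
  qed
  then have "weight Q \<le> (\<Sum>q\<in>Q. 1 / 2)"
    unfolding weight_def by (rule sum_mono)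
  then show ?thesis
    by simp
qed

lemma weight_targeted_bridged:
  assumes "root z \<noteq> z"
  shows "weight {q \<in> targeted z. reach_in (V - {fst q}) E z (root z)}
    \<le> card {y. \<exists>x. triangle_bridge (root z) y x z} / 2"
    (is "weight ?Q \<le> card ?B / 2")
proof -
  have bridge: "\<exists>x. snd q = {x, z} \<and> triangle_bridge (root z) (fst q) x z" if "q \<in> ?Q" for q
    using that target_non_root(4)[of "fst q" "snd q" z] assms by (auto simp: targeted_def)
  have "inj_on fst ?Q"
  proof (rule inj_onI)
    fix q q' assume "q \<in> ?Q" "q' \<in> ?Q" and fst_eq: "fst q = fst q'"
    then obtain x x' where "snd q = {x, z}" "triangle_bridge (root z) (fst q) x z"
      "snd q' = {x', z}" "triangle_bridge (root z) (fst q') x' z"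
      using bridge by blast
    then have "snd q = snd q'"
      using triangle_bridge_unique[of "root z" "fst q" x z x'] fst_eq by simp
    with fst_eq show "q = q'"
      by (rule prod_eqI)
  qed
  moreover have "fst ` ?Q \<subseteq> ?B"
    using bridge by blast
  ultimately have "card ?Q \<le> card ?B"
    using finite_triangle_bridge_middles by (rule card_inj_on_le)
  moreover have "weight ?Q \<le> card ?Q / 2"
    by (rule weight_le_half_card) (auto simp: targeted_def)
  ultimately show ?thesis
    by linarith
qed

lemma weight_targeted_non_root:
  assumes "root z \<noteq> z"
  shows "weight (targeted z) < 3 / 2"
proof -
  let ?sep = "\<lambda>q. \<not> reach_in (V - {fst q}) E z (root z)"
  let ?B = "{y. \<exists>x. triangle_bridge (root z) y x z}"
  have split: "weight (targeted z)
      = weight {q \<in> targeted z. ?sep q} + weight {q \<in> targeted z. \<not> ?sep q}"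
    using finite_targeted by (rule weight_split)
  have bridged: "weight {q \<in> targeted z. \<not> ?sep q} \<le> card ?B / 2"
    using weight_targeted_bridged[OF assms] by simp
  show ?thesis
  proof (cases "\<exists>p. E z p \<and> \<not> reach_in (V - {p}) E z (root z)")
    case True
    then obtain p where "E z p" "\<not> reach_in (V - {p}) E z (root z)"
      by blast
    then have "weight {q \<in> targeted z. ?sep q} < 1" "card ?B \<le> 1"
      using weight_targeted_separated[OF assms] card_triangle_bridge_middles_separated by blast+
    with split bridged show ?thesis
      by linarith
  next
    case False
    then have none: "{q \<in> targeted z. ?sep q} = {}"
      using targeted_non_root_edge[OF _ assms] by blast
    have "weight {q \<in> targeted z. ?sep q} = 0"
      by (simp only: none weight_def sum.empty)
    with split bridged card_triangle_bridge_middles[of "root z" z] show ?thesis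
      by linarith
  qed
qed

lemma weight_targeted_lt: "z \<in> V \<Longrightarrow> weight (targeted z) < 3 / 2"
  using weight_targeted_root weight_targeted_non_root by fastforce

end

theorem proposition3p5:
  fixes V :: "'a set" and E :: "'a \<Rightarrow> 'a \<Rightarrow> bool"
  assumes "simple_graph V E" and "V \<noteq> {}"
  shows "(\<Sum>p\<in>bad_paths V E. 1 / real (degree V E (fst p))) < 3 * real (card V) / 2"
proof -
  interpret sgraph V E
    using assms(1) by (rule sgraph.intro)
  have "(\<Sum>p\<in>bad_paths V E. 1 / real (degree V E (fst p))) = (\<Sum>z\<in>V. weight (targeted z))"
    using weight_bad_paths by (simp add: weight_def)
  also have "\<dots> < (\<Sum>z\<in>V. 3 / 2)"
    using finite_V assms(2) weight_targeted_lt by (rule sum_strict_mono)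
  also have "\<dots> = 3 * real (card V) / 2"
    by simp
  finally show ?thesis .
qed

end
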